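(* Let $\beta=w\alpha_i\in\Delta_{im}$ with $i\in I^{im}$, $w\in\mathcal W_{re}$, and let $v,v'\in\mathcal W$ with $v'\xrightarrow{\beta}v$, i.e. $v=r_\beta v'$ and $\ell(v)>\ell(v')$. Let $v=r_{i_k}\cdots r_{i_1}$ be an expression of $v$ and $\{x_1<\cdots<x_p\}=\{1\le x\le k:i_x=i\}$. Then $v'=r_{i_k}\cdots\widehat{r_{i_{x_p}}}\cdots r_{i_1}$, i.e. an expression of $v'$ is obtained by omitting the leftmost occurrence of $r_i$.
   Context: $I$ countable, $A=(a_{ij})$ Borcherds–Cartan matrix ($a_{ii}=2$ or $a_{ii}\in\mathbb Z_{\le0}$; $a_{ij}\in\mathbb Z_{\le0}$, $i\ne j$; $a_{ij}=0\iff a_{ji}=0$), $I^{re}=\{a_{ii}=2\}$, $I^{im}=I\setminus I^{re}$; datum $(A,\{\alpha_i\},\{\alpha_i^\vee\},P,P^\vee)$, $\alpha_i^\vee(\alpha_j)=a_{ij}$, linearly independent simple roots/coroots. $r_i(\mu)=\mu-\alpha_i^\vee(\mu)\alpha_i$; $\mathcal W_{re}=\langle r_i:i\in I^{re}\rangle\subset GL(\mathfrak h^* )$; $\Delta_{im}=\mathcal W_{re}\{\alpha_i\}_{i\in I^{im}}$. Monoid $\mathcal W$ generated by $r_i$ ($i\in I$) with relations $r_i^2=1$ ($i$ real), $(r_ir_j)^m=(r_jr_i)^m=1$ for real $i\neq j$ with $r_ir_j$ of order $m\in\{2,3,4,6\}$ in $GL(\mathfrak h^* )$, $r_ir_j=r_jr_i$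 for $i\in I^{im}$, $j\ne i$, $a_{ij}=0$. $\mathcal W_{re}$ is identified with the subgroup of $\mathcal W$ generated by real $r_i$; for $\beta=w\alpha_i$, $r_\beta=wr_iw^{-1}\in\mathcal W$ (well defined). $\ell$ = length function (minimal number of generators). *)

theory Defs
  imports Complex_Main "HOL-Library.Countable"
begin

text \<open>A word [i_k, ..., i_1] (a list) denotes the
product r_{i_k} ... r_{i_1}; so multiplication of words is list append, and the
leftmost factor of a product is the head of the list.\<close>

definition BC_matrix :: "('i \<Rightarrow> 'i \<Rightarrow> int) \<Rightarrow> bool" where
  "BC_matrix A \<longleftrightarrow>
     (\<forall>i. A i i = 2 \<or> A i i \<le> 0) \<and>
     (\<forall>i j. i \<noteq> j \<longrightarrow> A i j \<le> 0) \<and>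
     (\<forall>i j. A i j = 0 \<longleftrightarrow> A j i = 0)"

definition is_real :: "('i \<Rightarrow> 'i \<Rightarrow> int) \<Rightarrow> 'i \<Rightarrow> bool" where
  "is_real A i \<longleftrightarrow> A i i = 2"

definition realization ::
  "('i \<Rightarrow> 'i \<Rightarrow> int) \<Rightarrow> ('i \<Rightarrow> 'v::real_vector) \<Rightarrow> ('i \<Rightarrow> 'v \<Rightarrow> real) \<Rightarrow> bool" where
  "realization A alpha av \<longleftrightarrow>
     inj alpha \<and> independent (range alpha) \<and>
     (\<forall>i. linear (av i)) \<and>
     (\<forall>i j. av i (alpha j) = real_of_int (A i j)) \<and>
     (\<forall>S c. finite S \<longrightarrow> (\<forall>\<mu>. (\<Sum>i\<in>S. c i * av i \<mu>) = 0) \<longrightarrow> (\<forall>i\<in>S. c i = 0))"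

definition refl_map :: "('i \<Rightarrow> 'v::real_vector) \<Rightarrow> ('i \<Rightarrow> 'v \<Rightarrow> real) \<Rightarrow> 'i \<Rightarrow> 'v \<Rightarrow> 'v" where
  "refl_map alpha av i \<mu> = \<mu> - av i \<mu> *\<^sub>R alpha i"

definition has_order :: "('v \<Rightarrow> 'v) \<Rightarrow> nat \<Rightarrow> bool" where
  "has_order f m \<longleftrightarrow> 0 < m \<and> (f ^^ m) = id \<and> (\<forall>k. 0 < k \<and> k < m \<longrightarrow> (f ^^ k) \<noteq> id)"

inductive W_rel :: "('i \<Rightarrow> 'i \<Rightarrow> int) \<Rightarrow> ('i \<Rightarrow> 'v::real_vector) \<Rightarrow> ('i \<Rightarrow> 'v \<Rightarrow> real)
                    \<Rightarrow> 'i list \<Rightarrow> 'i list \<Rightarrow> bool"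
  for A alpha av where
  sq: "is_real A i \<Longrightarrow> W_rel A alpha av [i, i] []"
| braid1: "\<lbrakk>is_real A i; is_real A j; i \<noteq> j; m \<in> {2,3,4,6};
            has_order (refl_map alpha av i \<circ> refl_map alpha av j) m\<rbrakk>
           \<Longrightarrow> W_rel A alpha av (concat (replicate m [i, j])) []"
| braid2: "\<lbrakk>is_real A i; is_real A j; i \<noteq> j; m \<in> {2,3,4,6};
            has_order (refl_map alpha av i \<circ> refl_map alpha av j) m\<rbrakk>
           \<Longrightarrow> W_rel A alpha av (concat (replicate m [j, i])) []"
| comm: "\<lbrakk>\<not> is_real A i; j \<noteq> i; A i j = 0\<rbrakk> \<Longrightarrow> W_rel A alpha av [i, j] [j, i]"

inductive W_eq :: "('i \<Rightarrow> 'i \<Rightarrow> int) \<Rightarrow> ('i \<Rightarrow> 'v::real_vector) \<Rightarrow> ('i \<Rightarrow> 'v \<Rightarrow> real)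
                    \<Rightarrow> 'i list \<Rightarrow> 'i list \<Rightarrow> bool"
  for A alpha av where
  rel: "W_rel A alpha av u u' \<Longrightarrow> W_eq A alpha av (x @ u @ y) (x @ u' @ y)"
| refl: "W_eq A alpha av u u"
| sym: "W_eq A alpha av u u' \<Longrightarrow> W_eq A alpha av u' u"
| trans: "W_eq A alpha av u u' \<Longrightarrow> W_eq A alpha av u' u'' \<Longrightarrow> W_eq A alpha av u u''"

definition W_len :: "('i \<Rightarrow> 'i \<Rightarrow> int) \<Rightarrow> ('i \<Rightarrow> 'v::real_vector) \<Rightarrow> ('i \<Rightarrow> 'v \<Rightarrow> real)
                    \<Rightarrow> 'i list \<Rightarrow> nat" where
  "W_len A alpha av v = (LEAST n. \<exists>u. W_eq A alpha av u v \<and> length u = n)"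

text \<open>r_beta for beta = w alpha_i, w in W_re given by a word of real generators:
  r_beta = w r_i w^{-1}, and w^{-1} is the reversed word.\<close>
definition r_beta_word :: "'i list \<Rightarrow> 'i \<Rightarrow> 'i list" where
  "r_beta_word w i = w @ [i] @ rev w"

end

theory Submission
  imports Defs
begin

text \<open>For an imaginary generator i, no defining relation of W creates or destroys an occurrence
  of r_i; the only relation involving r_i merely commutes it past a neighbour. Hence deleting
  the leftmost occurrence of r_i is well defined on W. Applied to
  v = w r_i w^-1 v', where w contains only real generators, this deletion yields
  w w^-1 v' = v'.\<close>

declare W_eq.trans [trans]

lemma W_rel_imaginary_mem_iff:
  assumes "W_rel A alpha av u u'" "\<not> is_real A i"
  shows "i \<in> set u \<longleftrightarrow> i \<in> set u'"
  using assms by (induction rule: W_rel.induct) auto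

lemma W_rel_imaginary_remove1:
  assumes "W_rel A alpha av u u'" "\<not> is_real A i" "i \<in> set u"
  shows "remove1 i u = remove1 i u'"
  using assms by (induction rule: W_rel.induct) auto

lemma W_rel_remove1_in_context:
  assumes rel: "W_rel A alpha av u u'" and imag: "\<not> is_real A i"
  shows "W_eq A alpha av (remove1 i (x @ u @ y)) (remove1 i (x @ u' @ y))"
proof -
  consider "i \<in> set x" | "i \<notin> set x" "i \<in> set u" | "i \<notin> set x" "i \<notin> set u"
    by blast
  then show ?thesis
  proof cases
    case 1
    then show ?thesis
      using W_eq.rel[OF rel, of "remove1 i x" y] by (simp add: remove1_append)
  next
    case 2
    moreover have "i \<in> set u'" using 2 W_rel_imaginary_mem_iff[OF rel imag] by simp
    ultimately show ?thesis
      using W_rel_imaginary_remove1[OF rel imag]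
      by (simp add: remove1_append W_eq.refl)
  next
    case 3
    moreover have "i \<notin> set u'" using 3 W_rel_imaginary_mem_iff[OF rel imag] by simp
    ultimately show ?thesis
      using W_eq.rel[OF rel, of x "remove1 i y"] by (simp add: remove1_append)
  qed
qed

lemma W_eq_imaginary_mem_iff:
  assumes "W_eq A alpha av u u'" "\<not> is_real A i"
  shows "i \<in> set u \<longleftrightarrow> i \<in> set u'"
  using assms by (induction rule: W_eq.induct) (auto dest: W_rel_imaginary_mem_iff)

lemma W_eq_imaginary_remove1:
  assumes "W_eq A alpha av u u'" "\<not> is_real A i"
  shows "W_eq A alpha av (remove1 i u) (remove1 i u')"
  using assms
  by (induction rule: W_eq.induct) (auto intro: W_rel_remove1_in_context W_eq.intros)

lemma W_eq_real_word_rev_cancel: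
  assumes "\<forall>j\<in>set w. is_real A j"
  shows "W_eq A alpha av (x @ w @ rev w @ y) (x @ y)"
  using assms
proof (induction w arbitrary: x y)
  case Nil
  show ?case by (simp add: W_eq.refl)
next
  case (Cons a w)
  have "W_eq A alpha av ((x @ [a]) @ w @ rev w @ a # y) (x @ [a] @ a # y)"
    using Cons.IH[of "x @ [a]" "a # y"] Cons.prems by simp
  moreover have "W_eq A alpha av (x @ [a, a] @ y) (x @ [] @ y)"
    using Cons.prems by (intro W_eq.rel W_rel.sq) simp
  ultimately show ?case by (auto intro: W_eq.trans)
qed

theorem corollary2p2p8:
  fixes A :: "'i::countable \<Rightarrow> 'i \<Rightarrow> int"
    and alpha :: "'i \<Rightarrow> 'v::real_vector"
    and av :: "'i \<Rightarrow> 'v \<Rightarrow> real"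
    and w v v' L :: "'i list" and i :: 'i
  assumes "BC_matrix A"
    and "realization A alpha av"
    and imag: "\<not> is_real A i"
    and real_w: "\<forall>j\<in>set w. is_real A j"
    and v_eq: "W_eq A alpha av v (r_beta_word w i @ v')"
    and "W_len A alpha av v > W_len A alpha av v'"
    and L_eq: "W_eq A alpha av L v"
  shows "\<exists>pre suf. L = pre @ [i] @ suf \<and> i \<notin> set pre \<and> W_eq A alpha av (pre @ suf) v'"
proof -
  have L_expr: "W_eq A alpha av L (w @ [i] @ rev w @ v')"
    using W_eq.trans[OF L_eq v_eq] by (simp add: r_beta_word_def)
  have i_notin_w: "i \<notin> set w" using imag real_w by auto
  have "i \<in> set L" using W_eq_imaginary_mem_iff[OF L_expr imag] by simp
  then obtain pre suf where L_split: "L = pre @ i # suf" "i \<notin> set pre"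
    by (metis split_list_first)
  have "W_eq A alpha av (remove1 i L) (remove1 i (w @ [i] @ rev w @ v'))"
    using W_eq_imaginary_remove1[OF L_expr imag] .
  also have "remove1 i (w @ [i] @ rev w @ v') = [] @ w @ rev w @ v'"
    using i_notin_w by (simp add: remove1_append)
  also have "W_eq A alpha av \<dots> ([] @ v')"
    using W_eq_real_word_rev_cancel[OF real_w] .
  finally have "W_eq A alpha av (pre @ suf) v'"
    using L_split by (simp add: remove1_append)
  with L_split show ?thesis by auto
qed

end
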